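(* Let $f_1=f_1(x^1)$ be a smooth nowhere-vanishing function depending only on $x^1$, let $f_2=k_2$, $f_3=k_3$ with $k_2,k_3\in\mathbb R\setminus\{0\}$, and $g=\frac{1}{f_1^2}dx^1\otimes dx^1+\frac{1}{k_2^2}dx^2\otimes dx^2+\frac{1}{k_3^2}dx^3\otimes dx^3$. Let $F$ satisfy $F'=\frac{1}{f_1}$. Then $V=\sum_{k=1}^3V^kE_k$, with $E_i=f_i\frac{\partial}{\partial x^i}$, is a Killing vector field of $(\mathbb R^3,g)$ if and only if $V^1(x^2,x^3)=c_1x^2+c_2x^3+c_3$, $V^2(x^1,x^3)=-c_1k_2F(x^1)-\frac{c_4}{k_3}x^3+c_5$, $V^3(x^1,x^2)=-c_2k_3F(x^1)+\frac{c_4}{k_2}x^2+c_6$ for some $c_1,\dots,c_6\in\mathbb R$.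
   Context: $x^1,x^2,x^3$ are the standard coordinates on $\mathbb R^3$; $V^k$ are smooth functions and writing $h(x^i,x^j)$ means $h$ depends only on those variables. A vector field $V$ is Killing if $\mathcal L_Vg=0$. *)

theory Defs
  imports "HOL-Analysis.Analysis"
begin

definition partial :: "3 \<Rightarrow> (real^3 \<Rightarrow> real) \<Rightarrow> real^3 \<Rightarrow> real" where
  "partial i u x = deriv (\<lambda>t. u (x + t *\<^sub>R axis i 1)) 0"

definition smooth3 :: "(real^3 \<Rightarrow> real) \<Rightarrow> bool" where
  "smooth3 u \<longleftrightarrow> (\<forall>is. \<forall>x. (foldr partial is u) differentiable (at x))"

definition smooth1 :: "(real \<Rightarrow> real) \<Rightarrow> bool" where
  "smooth1 f \<longleftrightarrow> (\<forall>n. \<forall>t. ((deriv ^^ n) f) differentiable (at t))"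

text \<open>Coordinate expression of the Lie derivative of a metric g_ij along a vector field
  with coordinate components W^k (W = sum_k W^k d/dx^k).\<close>
definition lie_deriv_metric ::
  "(real^3 \<Rightarrow> real^3) \<Rightarrow> (3 \<Rightarrow> 3 \<Rightarrow> real^3 \<Rightarrow> real) \<Rightarrow> 3 \<Rightarrow> 3 \<Rightarrow> real^3 \<Rightarrow> real" where
  "lie_deriv_metric W g i j x =
     (\<Sum>k\<in>UNIV. W x $ k * partial k (g i j) x)
   + (\<Sum>k\<in>UNIV. g k j x * partial i (\<lambda>y. W y $ k) x)
   + (\<Sum>k\<in>UNIV. g i k x * partial j (\<lambda>y. W y $ k) x)"

definition killing :: "(real^3 \<Rightarrow> real^3) \<Rightarrow> (3 \<Rightarrow> 3 \<Rightarrow> real^3 \<Rightarrow> real) \<Rightarrow> bool" where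
  "killing W g \<longleftrightarrow> (\<forall>i j x. lie_deriv_metric W g i j x = 0)"

text \<open>The frame E_i = f_i d/dx^i with f_1 = f1(x^1), f_2 = k2, f_3 = k3.\<close>
definition frame_coeff :: "(real \<Rightarrow> real) \<Rightarrow> real \<Rightarrow> real \<Rightarrow> 3 \<Rightarrow> real^3 \<Rightarrow> real" where
  "frame_coeff f1 k2 k3 i x = (if i = 1 then f1 (x$1) else if i = 2 then k2 else k3)"

definition diag_metric :: "(real \<Rightarrow> real) \<Rightarrow> real \<Rightarrow> real \<Rightarrow> 3 \<Rightarrow> 3 \<Rightarrow> real^3 \<Rightarrow> real" where
  "diag_metric f1 k2 k3 i j x = (if i = j then 1 / (frame_coeff f1 k2 k3 i x)\<^sup>2 else 0)"

text \<open>Coordinate components of V = sum_k V^k E_k.\<close>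
definition frame_field :: "(real \<Rightarrow> real) \<Rightarrow> real \<Rightarrow> real \<Rightarrow> (real^3 \<Rightarrow> real^3) \<Rightarrow> real^3 \<Rightarrow> real^3" where
  "frame_field f1 k2 k3 V x = (\<chi> k. frame_coeff f1 k2 k3 k x * V x $ k)"

end

(*
  Since f_i depends on x^i only, the Lie derivative of g along V = sum V^k E_k has the
  components d_i V^j / f_j + d_j V^i / f_i.  Hence V^i is independent of x^i, and the mixed
  equations make V^1 = s + q x^2 + r x^3 + p x^2 x^3 while V^2, V^3 become affine in F(x^1).
  The (2,3) equation then contains the term 2 p (F(x^1) - F(0)); as F' = 1/f_1 never vanishes,
  F is injective and p = 0, after which the remaining (2,3) equation separates into constants.
*)

theory Submission
  imports Defs
begin

lemma DERIV_const_imp_affine: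
  fixes \<phi> :: "real \<Rightarrow> real"
  assumes "\<And>t. DERIV \<phi> t :> m"
  shows "\<phi> t = \<phi> 0 + m * t"
  using DERIV_const_ratio_const[of 0 t \<phi> m] assms by (cases "t = 0") (auto simp: algebra_simps)

lemma DERIV_proportional_imp_affine:
  fixes \<phi> \<psi> :: "real \<Rightarrow> real"
  assumes "\<And>t. DERIV \<phi> t :> m * \<psi>' t" and "\<And>t. DERIV \<psi> t :> \<psi>' t"
  shows "\<phi> t = \<phi> 0 + m * (\<psi> t - \<psi> 0)"
proof -
  have "\<forall>t. DERIV (\<lambda>t. \<phi> t - m * \<psi> t) t :> 0"
    using assms by (auto intro!: derivative_eq_intros)
  from DERIV_isconst_all[OF this, of t 0] show ?thesis by (simp add: algebra_simps)
qed

lemma inj_if_DERIV_nonzero: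
  fixes F :: "real \<Rightarrow> real"
  assumes "\<And>t. DERIV F t :> F' t" and "\<And>t. F' t \<noteq> 0"
  shows "inj F"
proof (rule injI, rule ccontr)
  fix a b assume "F a = F b" "a \<noteq> b"
  then obtain z where "F b - F a = (b - a) * F' z"
    using MVT2[of a b F F'] MVT2[of b a F F'] assms(1) by (cases "a < b") fastforce+
  with \<open>F a = F b\<close> \<open>a \<noteq> b\<close> assms(2)[of z] show False by simp
qed

lemma biaffine_if_partials_separate:
  fixes u :: "real \<Rightarrow> real \<Rightarrow> real"
  assumes "\<And>b c. DERIV (\<lambda>t. u t c) b :> \<alpha> c" and "\<And>b c. DERIV (\<lambda>t. u b t) c :> \<gamma> b"
  obtains p q r s where "\<And>b c. u b c = s + q * b + r * c + p * b * c"
    and "\<And>c. \<alpha> c = q + p * c" and "\<And>b. \<gamma> b = r + p * b"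
proof -
  have along_b: "u b c = u 0 c + \<alpha> c * b" for b c
    using DERIV_const_imp_affine[of "\<lambda>t. u t c"] assms(1) by blast
  have along_c: "u b c = u b 0 + \<gamma> b * c" for b c
    using DERIV_const_imp_affine[of "\<lambda>t. u b t"] assms(2) by blast
  have cross: "\<alpha> c * b + \<gamma> 0 * c = \<alpha> 0 * b + \<gamma> b * c" for b c
    using along_b[of b c] along_c[of 0 c] along_c[of b c] along_b[of b 0] by linarith
  define p where "p = \<gamma> 1 - \<gamma> 0"
  have \<alpha>: "\<alpha> c = \<alpha> 0 + p * c" for c
    using cross[where b=1 and c=c] by (simp add: p_def algebra_simps)
  have \<gamma>: "\<gamma> b = \<gamma> 0 + p * b" for b
    using cross[where b=b and c=1] \<alpha>[of 1] by (simp add: algebra_simps)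
  show thesis
  proof
    show "u b c = u 0 0 + \<alpha> 0 * b + \<gamma> 0 * c + p * b * c" for b c
      using along_b[of b c] along_c[of 0 c] \<alpha>[of c] by (simp add: algebra_simps)
  qed (fact \<alpha> \<gamma>)+
qed

lemma vector3_add_axis:
  "vector [a, b, c] + t *\<^sub>R axis 1 1 = (vector [a + t, b, c] :: real^3)"
  "vector [a, b, c] + t *\<^sub>R axis 2 1 = (vector [a, b + t, c] :: real^3)"
  "vector [a, b, c] + t *\<^sub>R axis 3 1 = (vector [a, b, c + t] :: real^3)"
  by (simp_all add: vec_eq_iff forall_3 axis_def)

lemma partial_vector3:
  "partial 1 u (vector [a, b, c]) = deriv (\<lambda>t. u (vector [t, b, c])) a"
  "partial 2 u (vector [a, b, c]) = deriv (\<lambda>t. u (vector [a, t, c])) b"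
  "partial 3 u (vector [a, b, c]) = deriv (\<lambda>t. u (vector [a, b, t])) c"
  unfolding partial_def vector3_add_axis
  by (simp_all only: deriv_shift_0[of _ a] deriv_shift_0[of _ b] deriv_shift_0[of _ c] o_def)

definition separately_differentiable :: "(real \<Rightarrow> real \<Rightarrow> real \<Rightarrow> real) \<Rightarrow> bool" where
  "separately_differentiable u \<longleftrightarrow> (\<forall>a b c.
     (\<lambda>t. u t b c) differentiable (at a) \<and> (\<lambda>t. u a t c) differentiable (at b) \<and>
     (\<lambda>t. u a b t) differentiable (at c))"

lemma separately_differentiable_vector3:
  fixes u :: "real^3 \<Rightarrow> real"
  assumes "\<And>x. u differentiable (at x)"
  shows "separately_differentiable (\<lambda>a b c. u (vector [a, b, c]))"
proof -
  have "(\<lambda>t. u (x + t *\<^sub>R axis i 1)) differentiable (at s)" for x i s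
    using differentiable_chain_at[of "\<lambda>t. x + t *\<^sub>R axis i 1" s u] assms
    by (simp add: o_def)
  from this[of "vector [0, _, _]" 1] this[of "vector [_, 0, _]" 2] this[of "vector [_, _, 0]" 3]
  show ?thesis
    unfolding separately_differentiable_def vector3_add_axis by simp
qed

lemma field_differentiable_if_real_differentiable:
  "f differentiable (at (x::real)) \<Longrightarrow> f field_differentiable (at x)"
  by (simp add: DERIV_deriv_iff_field_differentiable[symmetric] DERIV_deriv_iff_real_differentiable)

lemma lie_deriv_frame_field:
  assumes "\<And>t. f1 differentiable (at t)" "\<And>t. f1 t \<noteq> 0"
    and "k2 \<noteq> 0" and "k3 \<noteq> 0"
    and V: "\<And>k x. (\<lambda>x. V x $ k) differentiable (at x)"
  shows "lie_deriv_metric (frame_field f1 k2 k3 V) (diag_metric f1 k2 k3) i j x =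
    partial i (\<lambda>y. V y $ j) x / frame_coeff f1 k2 k3 j x
    + partial j (\<lambda>y. V y $ i) x / frame_coeff f1 k2 k3 i x"
proof -
  \<comment> \<open>In the diagonal terms the derivative of \<open>f\<^sub>1\<close> coming from \<open>E\<^sub>1\<close>
    cancels the one from \<open>1 / f\<^sub>1\<^sup>2\<close>.\<close>
  obtain a b c where x: "x = vector [a, b, c]"
    using forall_vector_3[of "\<lambda>y. \<exists>a b c. y = vector [a, b, c]"] by blast
  note d = separately_differentiable_vector3[OF V, unfolded separately_differentiable_def, rule_format]
  show ?thesis
    using exhaust_3[of i] exhaust_3[of j] assms unfolding x
    by (auto simp: lie_deriv_metric_def sum_3 partial_vector3 frame_field_def frame_coeff_def
        diag_metric_def d field_differentiable_if_real_differentiable deriv_pow)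
      (simp_all add: field_simps power2_eq_square power4_eq_xxxx)
qed

text \<open>\<open>A\<close>, \<open>B\<close>, \<open>C\<close> stand for the frame components \<open>V\<^sup>1, V\<^sup>2, V\<^sup>3\<close> as functions of
  \<open>(x\<^sup>1, x\<^sup>2, x\<^sup>3)\<close>.\<close>

definition frame_killing_eqs :: "(real \<Rightarrow> real) \<Rightarrow> real \<Rightarrow> real \<Rightarrow>
    (real \<Rightarrow> real \<Rightarrow> real \<Rightarrow> real) \<Rightarrow> (real \<Rightarrow> real \<Rightarrow> real \<Rightarrow> real) \<Rightarrow>
    (real \<Rightarrow> real \<Rightarrow> real \<Rightarrow> real) \<Rightarrow> bool" where
  "frame_killing_eqs f1 k2 k3 A B C \<longleftrightarrow> (\<forall>a b c.
     deriv (\<lambda>t. A t b c) a = 0 \<and> deriv (\<lambda>t. B a t c) b = 0 \<and> deriv (\<lambda>t. C a b t) c = 0 \<and>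
     deriv (\<lambda>t. A a t c) b / f1 a + deriv (\<lambda>t. B t b c) a / k2 = 0 \<and>
     deriv (\<lambda>t. A a b t) c / f1 a + deriv (\<lambda>t. C t b c) a / k3 = 0 \<and>
     deriv (\<lambda>t. B a b t) c / k2 + deriv (\<lambda>t. C a t c) b / k3 = 0)"

lemma killing_frame_field_iff:
  assumes "\<And>t. f1 differentiable (at t)" and f1: "\<And>t. f1 t \<noteq> 0"
    and "k2 \<noteq> 0" and "k3 \<noteq> 0"
    and "\<And>k x. (\<lambda>x. V x $ k) differentiable (at x)"
  shows "killing (frame_field f1 k2 k3 V) (diag_metric f1 k2 k3) \<longleftrightarrow>
    frame_killing_eqs f1 k2 k3 (\<lambda>a b c. V (vector [a, b, c]) $ 1)
      (\<lambda>a b c. V (vector [a, b, c]) $ 2) (\<lambda>a b c. V (vector [a, b, c]) $ 3)"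
  unfolding killing_def lie_deriv_frame_field[OF assms] frame_killing_eqs_def
  using f1 assms(3,4)
  by (simp add: forall_3 forall_vector_3 partial_vector3 frame_coeff_def) (auto simp: add.commute)

lemma killing_eqs_integrate_x1:
  fixes u v w :: "real \<Rightarrow> real \<Rightarrow> real" and f1 F :: "real \<Rightarrow> real"
  assumes f1: "\<And>t. f1 t \<noteq> 0" and k2: "k2 \<noteq> 0" and k3: "k3 \<noteq> 0"
    and F: "\<And>t. DERIV F t :> 1 / f1 t"
    and u: "\<And>b c. DERIV (\<lambda>t. u t c) b :> u_b b c" "\<And>b c. DERIV (\<lambda>t. u b t) c :> u_c b c"
    and v: "\<And>a c. DERIV (\<lambda>t. v t c) a :> v_a a c"
    and w: "\<And>a b. DERIV (\<lambda>t. w t b) a :> w_a a b"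
    and eq12: "\<And>a b c. u_b b c / f1 a + v_a a c / k2 = 0"
    and eq13: "\<And>a b c. u_c b c / f1 a + w_a a b / k3 = 0"
  obtains p q r s where "\<And>b c. u b c = s + q * b + r * c + p * b * c"
    and "\<And>a c. v a c = v 0 c - k2 * (q + p * c) * (F a - F 0)"
    and "\<And>a b. w a b = w 0 b - k3 * (r + p * b) * (F a - F 0)"
proof -
  have "u_b b c = - f1 0 / k2 * v_a 0 c" "u_c b c = - f1 0 / k3 * w_a 0 b" for b c
    using eq12[where a=0 and b=b and c=c] eq13[where a=0 and b=b and c=c] f1[of 0] k2 k3
    by (simp_all add: field_simps)
  then obtain p q r s where u_form: "\<And>b c. u b c = s + q * b + r * c + p * b * c"
    and u_b: "\<And>b c. u_b b c = q + p * c" and u_c: "\<And>b c. u_c b c = r + p * b"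
    using biaffine_if_partials_separate[of u "\<lambda>c. - f1 0 / k2 * v_a 0 c" "\<lambda>b. - f1 0 / k3 * w_a 0 b"] u
    by metis
  have v_a: "v_a a c = - k2 * (q + p * c) * (1 / f1 a)" for a c
    using eq12[where a=a and b=0 and c=c] u_b[of 0 c] f1[of a] k2 by (simp add: field_simps)
  have v_form: "v a c = v 0 c - k2 * (q + p * c) * (F a - F 0)" for a c
    using DERIV_proportional_imp_affine[where \<phi>="\<lambda>t. v t c" and \<psi>=F and \<psi>'="\<lambda>t. 1 / f1 t",
        OF v[unfolded v_a] F, of a]
    by simp
  have w_a: "w_a a b = - k3 * (r + p * b) * (1 / f1 a)" for a b
    using eq13[where a=a and b=b and c=0] u_c[of b 0] f1[of a] k3 by (simp add: field_simps)
  have w_form: "w a b = w 0 b - k3 * (r + p * b) * (F a - F 0)" for a b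
    using DERIV_proportional_imp_affine[where \<phi>="\<lambda>t. w t b" and \<psi>=F and \<psi>'="\<lambda>t. 1 / f1 t",
        OF w[unfolded w_a] F, of a]
    by simp
  show thesis using that u_form v_form w_form .
qed

lemma killing_eqs_integrate_x2_x3:
  fixes v w :: "real \<Rightarrow> real \<Rightarrow> real" and F :: "real \<Rightarrow> real"
  assumes "inj F" and k2: "k2 \<noteq> 0" and k3: "k3 \<noteq> 0"
    and v_form: "\<And>a c. v a c = v 0 c - k2 * (q + p * c) * (F a - F 0)"
    and w_form: "\<And>a b. w a b = w 0 b - k3 * (r + p * b) * (F a - F 0)"
    and v: "\<And>a c. DERIV (\<lambda>t. v a t) c :> v_c a c"
    and w: "\<And>a b. DERIV (\<lambda>t. w a t) b :> w_b a b"
    and eq23: "\<And>a b c. v_c a c / k2 + w_b a b / k3 = 0"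
  obtains m where "p = 0" and "\<And>c. v 0 c = v 0 0 + m * c"
    and "\<And>b. w 0 b = w 0 0 - k3 / k2 * m * b"
proof -
  have v_c: "v_c a c = v_c 0 c - k2 * p * (F a - F 0)" for a c
  proof -
    have "(\<lambda>t. v a t) = (\<lambda>t. v 0 t - k2 * (q + p * t) * (F a - F 0))"
      using v_form by blast
    with v[of 0 c] have "DERIV (\<lambda>t. v a t) c :> v_c 0 c - k2 * p * (F a - F 0)"
      by (auto intro!: derivative_eq_intros)
    with v[of a c] show ?thesis by (rule DERIV_unique)
  qed
  have w_b: "w_b a b = w_b 0 b - k3 * p * (F a - F 0)" for a b
  proof -
    have "(\<lambda>t. w a t) = (\<lambda>t. w 0 t - k3 * (r + p * t) * (F a - F 0))"
      using w_form by blast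
    with w[of 0 b] have "DERIV (\<lambda>t. w a t) b :> w_b 0 b - k3 * p * (F a - F 0)"
      by (auto intro!: derivative_eq_intros)
    with w[of a b] show ?thesis by (rule DERIV_unique)
  qed
  have "p * (F a - F 0) = 0" for a
  proof -
    have "v_c a 0 / k2 = v_c 0 0 / k2 - p * (F a - F 0)"
      using v_c[of a 0] k2 by (simp add: diff_divide_distrib)
    moreover have "w_b a 0 / k3 = w_b 0 0 / k3 - p * (F a - F 0)"
      using w_b[of a 0] k3 by (simp add: diff_divide_distrib)
    ultimately show ?thesis
      using eq23[of a 0 0] eq23[of 0 0 0] by linarith
  qed
  moreover have "F 1 \<noteq> F 0"
    using \<open>inj F\<close> by (metis injD zero_neq_one)
  ultimately have p: "p = 0"
    by (metis eq_iff_diff_eq_0 mult_eq_0_iff)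
  define m where "m = v_c 0 0"
  have "v_c 0 c = m" for c
    using eq23[where a=0 and b=0 and c=c] eq23[where a=0 and b=0 and c=0] k2
    unfolding m_def by (simp add: field_simps)
  then have v0: "v 0 c = v 0 0 + m * c" for c
    using v[of 0] by (intro DERIV_const_imp_affine) simp
  have "w_b 0 b = - k3 / k2 * m" for b
    using eq23[where a=0 and b=b and c=0] k2 k3 unfolding m_def by (simp add: field_simps)
  then have w0': "w 0 b = w 0 0 + - k3 / k2 * m * b" for b
    using w[of 0] by (intro DERIV_const_imp_affine) simp
  have w0: "w 0 b = w 0 0 - k3 / k2 * m * b" for b
    using w0'[of b] by simp
  show thesis
    using that[OF p] v0 w0 by blast
qed

lemma frame_killing_eqs_solution:
  fixes A B C :: "real \<Rightarrow> real \<Rightarrow> real \<Rightarrow> real" and f1 F :: "real \<Rightarrow> real"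
  assumes diff: "separately_differentiable A" "separately_differentiable B"
      "separately_differentiable C"
    and f1: "\<And>t. f1 t \<noteq> 0" and k2: "k2 \<noteq> 0" and k3: "k3 \<noteq> 0"
    and F: "\<And>t. DERIV F t :> 1 / f1 t"
    and eqs: "frame_killing_eqs f1 k2 k3 A B C"
  shows "\<exists>c1 c2 c3 c4 c5 c6. \<forall>a b c.
      A a b c = c1 * b + c2 * c + c3
    \<and> B a b c = - c1 * k2 * F a - c4 / k3 * c + c5
    \<and> C a b c = - c2 * k3 * F a + c4 / k2 * b + c6"
proof -
  note D = diff[unfolded separately_differentiable_def DERIV_deriv_iff_real_differentiable[symmetric]]
  note E = eqs[unfolded frame_killing_eqs_def, rule_format]
  define u where "u b c = A 0 b c" for b c
  define v where "v a c = B a 0 c" for a c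
  define w where "w a b = C a b 0" for a b
  have "A a b c = u b c" "B a b c = v a c" "C a b c = w a b" for a b c
    using DERIV_isconst_all[of "\<lambda>t. A t b c" a 0] DERIV_isconst_all[of "\<lambda>t. B a t c" b 0]
      DERIV_isconst_all[of "\<lambda>t. C a b t" c 0] D E
    unfolding u_def v_def w_def by metis+
  then have ABC: "A = (\<lambda>a b c. u b c)" "B = (\<lambda>a b c. v a c)" "C = (\<lambda>a b c. w a b)"
    by blast+
  note D = D[unfolded ABC] and E = E[unfolded ABC]
  obtain p q r s where u_form: "\<And>b c. u b c = s + q * b + r * c + p * b * c"
    and v_form: "\<And>a c. v a c = v 0 c - k2 * (q + p * c) * (F a - F 0)"
    and w_form: "\<And>a b. w a b = w 0 b - k3 * (r + p * b) * (F a - F 0)"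
    by (rule killing_eqs_integrate_x1[OF f1 k2 k3 F, where u=u and v=v and w=w]) (use D E in blast)+
  have "inj F"
    using inj_if_DERIV_nonzero[OF F] f1 by simp
  obtain m where "p = 0" and v0: "\<And>c. v 0 c = v 0 0 + m * c"
    and w0: "\<And>b. w 0 b = w 0 0 - k3 / k2 * m * b"
    by (rule killing_eqs_integrate_x2_x3[OF \<open>inj F\<close> k2 k3 v_form w_form]) (use D E in blast)+
  show ?thesis
  proof (intro exI allI conjI)
    fix a b c
    show "A a b c = q * b + r * c + s"
      using u_form[of b c] \<open>p = 0\<close> by (simp add: ABC)
    show "B a b c = - q * k2 * F a - (- k3 * m) / k3 * c + (v 0 0 + k2 * q * F 0)"
      using v_form[of a c] v0[of c] \<open>p = 0\<close> k3 by (simp add: ABC algebra_simps)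
    show "C a b c = - r * k3 * F a + (- k3 * m) / k2 * b + (w 0 0 + k3 * r * F 0)"
      using w_form[of a b] w0[of b] \<open>p = 0\<close> k2 by (simp add: ABC algebra_simps)
  qed
qed

lemma solution_frame_killing_eqs:
  fixes f1 F :: "real \<Rightarrow> real"
  assumes f1: "\<And>t. f1 t \<noteq> 0" and k2: "k2 \<noteq> 0" and k3: "k3 \<noteq> 0"
    and F: "\<And>t. DERIV F t :> 1 / f1 t"
    and A: "\<And>a b c. A a b c = c1 * b + c2 * c + c3"
    and B: "\<And>a b c. B a b c = - c1 * k2 * F a - c4 / k3 * c + c5"
    and C: "\<And>a b c. C a b c = - c2 * k3 * F a + c4 / k2 * b + c6"
  shows "frame_killing_eqs f1 k2 k3 A B C"
proof -
  have "deriv (\<lambda>t. A t b c) a = 0" "deriv (\<lambda>t. B a t c) b = 0" "deriv (\<lambda>t. C a b t) c = 0"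
    "deriv (\<lambda>t. A a t c) b = c1" "deriv (\<lambda>t. A a b t) c = c2"
    "deriv (\<lambda>t. B t b c) a = - c1 * k2 * (1 / f1 a)" "deriv (\<lambda>t. C t b c) a = - c2 * k3 * (1 / f1 a)"
    "deriv (\<lambda>t. B a b t) c = - c4 / k3" "deriv (\<lambda>t. C a t c) b = c4 / k2" for a b c
    unfolding A B C using k2 k3 by (auto intro!: DERIV_imp_deriv derivative_eq_intros F)
  then show ?thesis
    unfolding frame_killing_eqs_def using f1 k2 k3 by (simp add: field_simps)
qed

theorem mainTheorem10:
  fixes f1 F :: "real \<Rightarrow> real" and k2 k3 :: real and V :: "real^3 \<Rightarrow> real^3"
  assumes "smooth1 f1" and "\<forall>t. f1 t \<noteq> 0"
    and "k2 \<noteq> 0" and "k3 \<noteq> 0"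
    and "\<forall>t. (F has_real_derivative 1 / f1 t) (at t)"
    and "\<forall>k. smooth3 (\<lambda>x. V x $ k)"
  shows "killing (frame_field f1 k2 k3 V) (diag_metric f1 k2 k3) \<longleftrightarrow>
    (\<exists>c1 c2 c3 c4 c5 c6 :: real. \<forall>x.
        V x $ 1 = c1 * x$2 + c2 * x$3 + c3
      \<and> V x $ 2 = - c1 * k2 * F (x$1) - c4 / k3 * x$3 + c5
      \<and> V x $ 3 = - c2 * k3 * F (x$1) + c4 / k2 * x$2 + c6)"
proof -
  have f1: "\<And>t. f1 differentiable (at t)" "\<And>t. f1 t \<noteq> 0"
    using assms(1,2) unfolding smooth1_def by (metis funpow_0, blast)
  have V: "\<And>k x. (\<lambda>x. V x $ k) differentiable (at x)"
    using assms(6) unfolding smooth3_def by (metis foldr_Nil id_apply)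
  have F: "\<And>t. DERIV F t :> 1 / f1 t"
    using assms(5) by blast
  let ?V = "\<lambda>k a b c. V (vector [a, b, c]) $ k"
  note V_diff = separately_differentiable_vector3[OF V]
  have "killing (frame_field f1 k2 k3 V) (diag_metric f1 k2 k3) \<longleftrightarrow>
      frame_killing_eqs f1 k2 k3 (?V 1) (?V 2) (?V 3)"
    by (rule killing_frame_field_iff[OF f1 assms(3,4) V])
  also have "\<dots> \<longleftrightarrow> (\<exists>c1 c2 c3 c4 c5 c6. \<forall>a b c.
        ?V 1 a b c = c1 * b + c2 * c + c3
      \<and> ?V 2 a b c = - c1 * k2 * F a - c4 / k3 * c + c5
      \<and> ?V 3 a b c = - c2 * k3 * F a + c4 / k2 * b + c6)"
    using frame_killing_eqs_solution[OF V_diff V_diff V_diff f1(2) assms(3,4) F]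
      solution_frame_killing_eqs[OF f1(2) assms(3,4) F] by meson
  finally show ?thesis
    by (simp only: forall_vector_3 vector_3)
qed

end
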